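(* Let $\alpha\in(0,1)$ and $k\in\mathbb{Z}\setminus\{0\}$. For $a\in\mathbb{R}$ let $R^{(a)}_{G_{\alpha,k}}$ be the integral operator on functions on $\mathbb{R}^+$ with kernel $\mathscr{G}^{(a)}_{\alpha,k}(x,\rho)=x^ak^2G_{\alpha,k}(x,\rho)$. Then: (i) for each $a\in(-\frac{1-\alpha}{2},2\alpha]$, $R^{(a)}_{G_{\alpha,k}}$ can be realised as an everywhere defined bounded operator on $L^2(\mathbb{R}^+,\mathrm{d}x)$, which is moreover self-adjoint if $a=0$; (ii) for $a=2\alpha$, the operator $R^{(2\alpha)}_{G_{\alpha,k}}$ is bounded uniformly in $k$, i.e. $\sup_{k\in\mathbb{Z}\setminus\{0\}}\|R^{(2\alpha)}_{G_{\alpha,k}}\|<+\infty$.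
   Context: $\Phi_{\alpha,k}(x)=\sqrt{\frac{\pi(1+\alpha)}{2|k|}}x^{-\alpha/2}e^{-\frac{|k|}{1+\alpha}x^{1+\alpha}}$, $F_{\alpha,k}(x)=\sqrt{\frac{2(1+\alpha)}{\pi|k|}}x^{-\alpha/2}\sinh\big(\frac{|k|}{1+\alpha}x^{1+\alpha}\big)$ for $x>0$, and $G_{\alpha,k}(r,\rho)=\frac{1}{1+\alpha}\Phi_{\alpha,k}(r)F_{\alpha,k}(\rho)$ if $0<\rho<r$, $G_{\alpha,k}(r,\rho)=\frac{1}{1+\alpha}F_{\alpha,k}(r)\Phi_{\alpha,k}(\rho)$ if $0<r<\rho$. *)

theory Defs
  imports "HOL-Analysis.Analysis"
begin

definition Phi :: "real \<Rightarrow> int \<Rightarrow> real \<Rightarrow> real" where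
  "Phi \<alpha> k x = sqrt (pi * (1 + \<alpha>) / (2 * \<bar>real_of_int k\<bar>)) * x powr (-\<alpha>/2)
      * exp (- (\<bar>real_of_int k\<bar> / (1 + \<alpha>)) * x powr (1 + \<alpha>))"

definition F :: "real \<Rightarrow> int \<Rightarrow> real \<Rightarrow> real" where
  "F \<alpha> k x = sqrt (2 * (1 + \<alpha>) / (pi * \<bar>real_of_int k\<bar>)) * x powr (-\<alpha>/2)
      * sinh ((\<bar>real_of_int k\<bar> / (1 + \<alpha>)) * x powr (1 + \<alpha>))"

text \<open>Green function; on the (null) diagonal r = rho we set it to 0.\<close>
definition G :: "real \<Rightarrow> int \<Rightarrow> real \<Rightarrow> real \<Rightarrow> real" where
  "G \<alpha> k r \<rho> =
     (if 0 < \<rho> \<and> \<rho> < r then Phi \<alpha> k r * F \<alpha> k \<rho> / (1 + \<alpha>)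
      else if 0 < r \<and> r < \<rho> then F \<alpha> k r * Phi \<alpha> k \<rho> / (1 + \<alpha>)
      else 0)"

definition Gker :: "real \<Rightarrow> real \<Rightarrow> int \<Rightarrow> real \<Rightarrow> real \<Rightarrow> real" where
  "Gker a \<alpha> k x \<rho> = x powr a * (real_of_int k)\<^sup>2 * G \<alpha> k x \<rho>"

definition L2pos :: "(real \<Rightarrow> complex) set" where
  "L2pos = {f. f \<in> borel_measurable lborel \<and>
               set_integrable lborel {0<..} (\<lambda>x. (cmod (f x))\<^sup>2)}"

definition L2norm :: "(real \<Rightarrow> complex) \<Rightarrow> real" where
  "L2norm f = sqrt (LINT x:{0<..}|lborel. (cmod (f x))\<^sup>2)"

definition int_op :: "(real \<Rightarrow> real \<Rightarrow> real) \<Rightarrow> (real \<Rightarrow> complex) \<Rightarrow> real \<Rightarrow> complex" where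
  "int_op K f x = (LINT \<rho>:{0<..}|lborel. complex_of_real (K x \<rho>) * f \<rho>)"

text \<open>The integral operator with kernel K is everywhere defined on L2(R+) (the defining
  integral converges for a.e. x > 0), maps into L2(R+) and has operator norm at most C.\<close>
definition L2_bounded_by :: "real \<Rightarrow> (real \<Rightarrow> real \<Rightarrow> real) \<Rightarrow> bool" where
  "L2_bounded_by C K \<longleftrightarrow>
     (\<forall>f\<in>L2pos.
        (AE x in lborel. 0 < x \<longrightarrow>
            set_integrable lborel {0<..} (\<lambda>\<rho>. complex_of_real (K x \<rho>) * f \<rho>))
      \<and> int_op K f \<in> L2pos
      \<and> L2norm (int_op K f) \<le> C * L2norm f)"

definition L2_bounded :: "(real \<Rightarrow> real \<Rightarrow> real) \<Rightarrow> bool" where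
  "L2_bounded K \<longleftrightarrow> (\<exists>C. L2_bounded_by C K)"

text \<open>Self-adjointness (for an everywhere defined bounded operator): symmetry of the
  L2(R+) inner product.\<close>
definition L2_selfadjoint :: "(real \<Rightarrow> real \<Rightarrow> real) \<Rightarrow> bool" where
  "L2_selfadjoint K \<longleftrightarrow> L2_bounded K \<and>
     (\<forall>f\<in>L2pos. \<forall>g\<in>L2pos.
        (LINT x:{0<..}|lborel. int_op K f x * cnj (g x))
      = (LINT x:{0<..}|lborel. f x * cnj (int_op K g x)))"

end

theory Submission
  imports Defs "HOL-Real_Asymp.Real_Asymp"
begin

(* Put kappa = |k|/(1+alpha) and let m, M be the smaller and the larger of x and rho. Then the
   kernel equals (1+alpha) kappa x^(a-alpha/2) rho^(-alpha/2) exp(-kappa M^(1+alpha))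
   sinh(kappa m^(1+alpha)), and M^(1+alpha) - m^(1+alpha) >= M^alpha |x - rho| bounds the factor
   exp * sinh both by exp(-kappa M^alpha |x - rho|)/2 and by kappa m^(1+alpha) times the same
   exponential. For a = 2 alpha the resulting majorants have row and column integrals bounded by
   absolute constants (kappa cancels), so the Schur test bounds the operator uniformly in k. For
   smaller a the kernel is dominated by the one for a = 2 alpha where x >= 1, and by
   (1+alpha) kappa^2 x^(a+1) exp(-kappa x^alpha |x - rho|) where x < 1, which is integrable as long
   as a >= alpha - 1. For a = 0 the kernel is symmetric and Fubini gives self-adjointness. *)

lemma exp_neg_mult_sinh_le: "exp (-u) * sinh v \<le> exp (v - u) / (2::real)"
proof -
  have "exp (-u) * sinh v = (exp (v - u) - exp (-u - v)) / 2"
    by (simp add: sinh_field_def field_simps exp_diff exp_minus)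
  then show ?thesis by simp
qed

lemma sinh_le_mult_exp:
  fixes v :: real
  assumes "0 \<le> v"
  shows "sinh v \<le> v * exp v"
proof -
  have "(1 - 2 * v) * exp v \<le> exp (-2 * v) * exp v"
    using exp_ge_add_one_self[of "-2 * v"] by (intro mult_right_mono) auto
  also have "\<dots> = exp (-v)" by (simp add: exp_add[symmetric])
  finally show ?thesis by (simp add: sinh_field_def field_simps)
qed

lemma powr_mult_diff_le_powr_diff:
  fixes m M \<alpha> :: real
  assumes "0 < m" "m \<le> M" "0 \<le> \<alpha>"
  shows "M powr \<alpha> * (M - m) \<le> M powr (1 + \<alpha>) - m powr (1 + \<alpha>)"
proof -
  have "m * m powr \<alpha> \<le> m * M powr \<alpha>"
    using assms by (intro mult_left_mono powr_mono2) auto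
  moreover have "M powr (1 + \<alpha>) = M * M powr \<alpha>" "m powr (1 + \<alpha>) = m * m powr \<alpha>"
    using assms by (simp_all add: powr_add)
  ultimately show ?thesis by (simp add: algebra_simps)
qed

lemma mult_exp_neg_half_le: "0 \<le> y \<Longrightarrow> y * exp (-y/2) \<le> (2::real)"
proof -
  assume "0 \<le> y"
  have "y \<le> 2 * exp (y/2)" using exp_ge_add_one_self[of "y/2"] by linarith
  then have "y * exp (-y/2) \<le> 2 * exp (y/2) * exp (-y/2)" by (intro mult_right_mono) auto
  then show ?thesis by (simp add: mult.assoc exp_add[symmetric])
qed

lemma exp_max_sinh_min_le:
  fixes x \<rho> \<kappa> \<alpha> :: real
  assumes "0 < x" "0 < \<rho>" "0 \<le> \<kappa>" "0 \<le> \<alpha>"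
  defines "E \<equiv> exp (-\<kappa> * max x \<rho> powr (1 + \<alpha>)) * sinh (\<kappa> * min x \<rho> powr (1 + \<alpha>))"
    and "D \<equiv> \<kappa> * max x \<rho> powr \<alpha> * \<bar>x - \<rho>\<bar>"
  shows "E \<le> exp (-D) / 2"
    and "E \<le> \<kappa> * min x \<rho> powr (1 + \<alpha>) * exp (-D)"
proof -
  define u where "u = \<kappa> * max x \<rho> powr (1 + \<alpha>)"
  define v where "v = \<kappa> * min x \<rho> powr (1 + \<alpha>)"
  have "\<bar>x - \<rho>\<bar> = max x \<rho> - min x \<rho>" by (simp add: max_def min_def)
  then have "D \<le> u - v"
    using powr_mult_diff_le_powr_diff[of "min x \<rho>" "max x \<rho>" \<alpha>] assms
    by (simp add: D_def u_def v_def mult_left_mono right_diff_distrib[symmetric] mult.assoc)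
  then have decay: "exp (v - u) \<le> exp (-D)" by simp
  have E: "E = exp (-u) * sinh v" by (simp add: E_def u_def v_def)
  show "E \<le> exp (-D) / 2"
    unfolding E using exp_neg_mult_sinh_le[of u v] decay by linarith
  have "0 \<le> v" using assms by (simp add: v_def)
  then have "E \<le> exp (-u) * (v * exp v)"
    unfolding E by (intro mult_left_mono sinh_le_mult_exp) auto
  also have "\<dots> = v * exp (v - u)" by (simp add: exp_diff exp_minus field_simps)
  also have "\<dots> \<le> v * exp (-D)" using decay \<open>0 \<le> v\<close> by (rule mult_left_mono)
  finally show "E \<le> \<kappa> * min x \<rho> powr (1 + \<alpha>) * exp (-D)" by (simp add: v_def)
qed

lemma exp_decay_far_from_diagonal:
  fixes x \<rho> \<kappa> \<alpha> :: real
  assumes "0 \<le> \<kappa>" "0 < x" "2 * \<rho> \<le> x"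
  shows "exp (-\<kappa> * x powr \<alpha> * \<bar>x - \<rho>\<bar>) \<le> exp (-\<kappa>/2 * x powr (1 + \<alpha>))"
proof -
  have "x powr (1 + \<alpha>) / 2 \<le> x powr \<alpha> * \<bar>x - \<rho>\<bar>"
    using assms by (simp add: powr_add mult_left_mono)
  from mult_left_mono[OF this assms(1)] show ?thesis by (simp add: mult_ac)
qed

section \<open>Integrals on the real line\<close>

lemma nn_integral_exp_neg_halfline:
  fixes \<beta> s :: real
  assumes "0 < \<beta>"
  shows "(\<integral>\<^sup>+t\<in>{s..}. ennreal (exp (-\<beta> * (t - s))) \<partial>lborel) = ennreal (1/\<beta>)"
proof -
  have "((\<lambda>t. exp (\<beta> * s) * exp (-\<beta> * t)) has_integral exp (\<beta> * s) * (exp (-\<beta> * s) / \<beta>)) {s..}"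
    using assms by (intro has_integral_mult_right has_integral_exp_minus_to_infinity)
  moreover have "exp (\<beta> * s) * exp (-\<beta> * t) = exp (-\<beta> * (t - s))" for t
    by (simp add: exp_add[symmetric] algebra_simps)
  moreover have "exp (\<beta> * s) * (exp (-\<beta> * s) / \<beta>) = 1/\<beta>"
    by (simp add: exp_minus field_simps)
  ultimately have "((\<lambda>t. exp (-\<beta> * (t - s))) has_integral 1/\<beta>) {s..}" by simp
  then show ?thesis by (intro nn_integral_has_integral_lebesgue') auto
qed

lemma nn_integral_exp_neg_abs_le:
  fixes \<beta> s :: real
  assumes "0 < \<beta>"
  shows "(\<integral>\<^sup>+t. ennreal (exp (-\<beta> * \<bar>t - s\<bar>)) \<partial>lborel) \<le> ennreal (2/\<beta>)"
proof -
  define g where "g t = ennreal (exp (-\<beta> * (t - s))) * indicator {s..} t" for t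
  have [measurable]: "g \<in> borel_measurable borel" unfolding g_def by measurable
  have "(\<integral>\<^sup>+t. ennreal (exp (-\<beta> * \<bar>t - s\<bar>)) \<partial>lborel) \<le> (\<integral>\<^sup>+t. g t + g (2 * s - t) \<partial>lborel)"
    by (intro nn_integral_mono) (auto simp: g_def indicator_def abs_if algebra_simps)
  also have "\<dots> = (\<integral>\<^sup>+t. g t \<partial>lborel) + (\<integral>\<^sup>+t. g (2 * s + (-1) * t) \<partial>lborel)"
    by (subst nn_integral_add) auto
  also have "(\<integral>\<^sup>+t. g (2 * s + (-1) * t) \<partial>lborel) = (\<integral>\<^sup>+t. g t \<partial>lborel)"
    using nn_integral_real_affine[of g "-1" "2 * s"] by simp
  also have "(\<integral>\<^sup>+t. g t \<partial>lborel) = ennreal (1/\<beta>)"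
    unfolding g_def by (rule nn_integral_exp_neg_halfline[OF assms])
  finally show ?thesis using assms by (simp add: ennreal_plus[symmetric] del: ennreal_plus)
qed

lemma nn_integral_powr_Icc:
  fixes \<gamma> c :: real
  assumes "-1 < \<gamma>" "0 \<le> c"
  shows "(\<integral>\<^sup>+t. ennreal (indicator {0..c} t * t powr \<gamma>) \<partial>lborel) = ennreal (c powr (\<gamma> + 1) / (\<gamma> + 1))"
  using has_integral_powr_from_0[OF assms] by (intro nn_integral_has_integral_lebesgue) auto

lemma nn_integral_powr_exp_neg_powr:
  fixes p \<beta> :: real
  assumes p: "0 < p" and \<beta>: "0 < \<beta>"
  shows "(\<integral>\<^sup>+t. ennreal (indicator {0..} t * (t powr (2*p - 1) * exp (-\<beta> * t powr p))) \<partial>lborel)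
    = ennreal (1 / (p * \<beta>\<^sup>2))"
proof -
  define F where "F t = -(1 + \<beta> * t powr p) * exp (-\<beta> * t powr p) / (p * \<beta>\<^sup>2)" for t
  define f where "f t = t powr (2*p - 1) * exp (-\<beta> * t powr p)" for t
  have F': "(F has_real_derivative f t) (at t)" if "0 < t" for t
  proof -
    have "(F has_real_derivative
        (-(\<beta> * (p * t powr (p - 1))) * exp (-\<beta> * t powr p)
         + -(1 + \<beta> * t powr p) * (exp (-\<beta> * t powr p) * (-\<beta> * (p * t powr (p - 1)))))
          / (p * \<beta>\<^sup>2)) (at t)"
      unfolding F_def using that p \<beta> by (auto intro!: derivative_eq_intros)
    moreover have "t powr p * t powr (p - 1) = t powr (2*p - 1)" by (simp add: powr_add[symmetric])
    then have "(-(\<beta> * (p * t powr (p - 1))) * exp (-\<beta> * t powr p)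
        + -(1 + \<beta> * t powr p) * (exp (-\<beta> * t powr p) * (-\<beta> * (p * t powr (p - 1))))) / (p * \<beta>\<^sup>2) = f t"
      using p \<beta> by (simp add: f_def field_simps power2_eq_square)
    ultimately show ?thesis by simp
  qed
  have ftc: "(f has_integral (F y - F 0)) {0..y}" if "0 \<le> y" for y
  proof (rule fundamental_theorem_of_calculus_interior[OF that])
    show "continuous_on {0..y} F"
      unfolding F_def using p \<beta> by (intro continuous_intros continuous_on_powr') auto
    show "(F has_vector_derivative f t) (at t)" if "t \<in> {0<..<y}" for t
      using F' that by (simp add: has_real_derivative_iff_has_vector_derivative)
  qed
  have "(f has_integral (0 - F 0)) {0..}"
  proof (rule has_integral_to_inf)
    show "f integrable_on {0..y}" for y
      using ftc[of y] by (cases "0 \<le> y") (auto simp: integrable_on_empty)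
    have "\<forall>\<^sub>F y in at_top. integral {0..y} f = F y - F 0"
      using ftc eventually_at_top_linorder by (auto intro!: exI[of _ 0] integral_unique)
    moreover have "((\<lambda>y. F y - F 0) \<longlongrightarrow> 0 - F 0) at_top"
      unfolding F_def using p \<beta> by real_asymp
    ultimately show "((\<lambda>y. integral {0..y} f) \<longlongrightarrow> 0 - F 0) at_top"
      by (simp add: filterlim_cong)
    show "0 \<le> f t" for t by (simp add: f_def)
  qed
  moreover have "0 - F 0 = 1 / (p * \<beta>\<^sup>2)" using p by (simp add: F_def)
  ultimately have "(f has_integral 1 / (p * \<beta>\<^sup>2)) {0..}" by simp
  then show ?thesis
    unfolding f_def by (intro nn_integral_has_integral_lebesgue) auto
qed

lemma nn_integral_le_by_majorants:
  fixes f g h :: "real \<Rightarrow> real"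
  assumes [measurable]: "g \<in> borel_measurable borel" "h \<in> borel_measurable borel"
    and le: "\<And>t. f t \<le> a * g t + b * h t"
    and nonneg: "0 \<le> a" "0 \<le> b" "\<And>t. 0 \<le> g t" "\<And>t. 0 \<le> h t"
    and Ig: "(\<integral>\<^sup>+t. ennreal (g t) \<partial>lborel) \<le> ennreal Ig" "0 \<le> Ig"
    and Ih: "(\<integral>\<^sup>+t. ennreal (h t) \<partial>lborel) \<le> ennreal Ih" "0 \<le> Ih"
  shows "(\<integral>\<^sup>+t. ennreal (f t) \<partial>lborel) \<le> ennreal (a * Ig + b * Ih)"
proof -
  have "ennreal (f t) \<le> ennreal a * ennreal (g t) + ennreal b * ennreal (h t)" for t
    using le[of t] nonneg
    by (simp add: ennreal_leI ennreal_plus[symmetric] ennreal_mult[symmetric] del: ennreal_plus)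
  then have "(\<integral>\<^sup>+t. ennreal (f t) \<partial>lborel)
      \<le> ennreal a * (\<integral>\<^sup>+t. ennreal (g t) \<partial>lborel) + ennreal b * (\<integral>\<^sup>+t. ennreal (h t) \<partial>lborel)"
    by (subst nn_integral_cmult[symmetric], simp)+ (subst nn_integral_add[symmetric]; auto intro: nn_integral_mono)
  also have "\<dots> \<le> ennreal a * ennreal Ig + ennreal b * ennreal Ih"
    using Ig Ih by (intro add_mono mult_left_mono) auto
  also have "\<dots> = ennreal (a * Ig + b * Ih)"
    using nonneg Ig Ih by (simp add: ennreal_plus ennreal_mult)
  finally show ?thesis .
qed

lemma set_nn_integral_le_nn_integral: "(\<integral>\<^sup>+x\<in>A. f x \<partial>M) \<le> (\<integral>\<^sup>+x. f x \<partial>M)"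
  by (intro nn_integral_mono) (simp add: indicator_def)

section \<open>The Schur test on L2 of the half-line\<close>

lemma borel_measurable_cnj [measurable]: "(cnj :: complex \<Rightarrow> complex) \<in> borel_measurable borel"
  by (intro borel_measurable_continuous_onI continuous_intros)

lemma L2norm_nonneg: "0 \<le> L2norm f"
  unfolding L2norm_def set_lebesgue_integral_def by (simp add: integral_nonneg_AE)

lemma L2pos_nn_integral:
  assumes "f \<in> L2pos"
  shows "(\<integral>\<^sup>+x\<in>{0<..}. ennreal ((cmod (f x))\<^sup>2) \<partial>lborel) = ennreal ((L2norm f)\<^sup>2)"
proof -
  have int: "integrable lborel (\<lambda>x. indicator {0<..} x *\<^sub>R (cmod (f x))\<^sup>2)"
    using assms by (simp add: L2pos_def set_integrable_def)
  have "(\<integral>\<^sup>+x\<in>{0<..}. ennreal ((cmod (f x))\<^sup>2) \<partial>lborel)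
      = (\<integral>\<^sup>+x. ennreal (indicator {0<..} x *\<^sub>R (cmod (f x))\<^sup>2) \<partial>lborel)"
    by (intro nn_integral_cong) (auto split: split_indicator)
  also have "\<dots> = ennreal (LINT x:{0<..}|lborel. (cmod (f x))\<^sup>2)"
    unfolding set_lebesgue_integral_def
    by (intro nn_integral_eq_integral int) (auto split: split_indicator)
  also have "(LINT x:{0<..}|lborel. (cmod (f x))\<^sup>2) = (L2norm f)\<^sup>2"
    unfolding L2norm_def set_lebesgue_integral_def by (simp add: integral_nonneg_AE)
  finally show ?thesis .
qed

lemma L2pos_of_nn_integral_le:
  assumes [measurable]: "g \<in> borel_measurable lborel"
    and le: "(\<integral>\<^sup>+x\<in>{0<..}. ennreal ((cmod (g x))\<^sup>2) \<partial>lborel) \<le> ennreal N" and "0 \<le> N"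
  shows "g \<in> L2pos" and "L2norm g \<le> sqrt N"
proof -
  have eq: "(\<integral>\<^sup>+x. ennreal (indicator {0<..} x *\<^sub>R (cmod (g x))\<^sup>2) \<partial>lborel)
      = (\<integral>\<^sup>+x\<in>{0<..}. ennreal ((cmod (g x))\<^sup>2) \<partial>lborel)"
    by (intro nn_integral_cong) (auto split: split_indicator)
  have int: "integrable lborel (\<lambda>x. indicator {0<..} x *\<^sub>R (cmod (g x))\<^sup>2)"
  proof (rule integrableI_nonneg)
    have "(\<integral>\<^sup>+x. ennreal (indicator {0<..} x *\<^sub>R (cmod (g x))\<^sup>2) \<partial>lborel) < \<infinity>"
      unfolding eq using le by (simp add: le_less_trans)
    then show "(\<integral>\<^sup>+x. ennreal (indicator {0<..} x *\<^sub>R (cmod (g x))\<^sup>2) \<partial>lborel) < \<infinity>" .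
  qed auto
  then show "g \<in> L2pos" by (simp add: L2pos_def set_integrable_def)
  have "(LINT x:{0<..}|lborel. (cmod (g x))\<^sup>2)
      = enn2real (\<integral>\<^sup>+x\<in>{0<..}. ennreal ((cmod (g x))\<^sup>2) \<partial>lborel)"
    unfolding set_lebesgue_integral_def eq[symmetric]
    by (intro integral_eq_nn_integral) (auto split: split_indicator)
  also have "\<dots> \<le> N" using le \<open>0 \<le> N\<close> by (intro enn2real_leI) auto
  finally show "L2norm g \<le> sqrt N" by (simp add: L2norm_def)
qed

lemma nn_integral_kernel_swap_le:
  fixes K :: "real \<Rightarrow> real \<Rightarrow> real" and v :: "real \<Rightarrow> ennreal"
  assumes [measurable]: "(\<lambda>(x, y). K x y) \<in> borel_measurable (lborel \<Otimes>\<^sub>M lborel)" "v \<in> borel_measurable lborel"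
    and col: "\<And>y. 0 < y \<Longrightarrow> (\<integral>\<^sup>+x\<in>{0<..}. ennreal (K x y) \<partial>lborel) \<le> ennreal B"
  shows "(\<integral>\<^sup>+x\<in>{0<..}. (\<integral>\<^sup>+y\<in>{0<..}. ennreal (K x y) * v y \<partial>lborel) \<partial>lborel)
    \<le> ennreal B * (\<integral>\<^sup>+y\<in>{0<..}. v y \<partial>lborel)"
proof -
  have "(\<integral>\<^sup>+x\<in>{0<..}. (\<integral>\<^sup>+y\<in>{0<..}. ennreal (K x y) * v y \<partial>lborel) \<partial>lborel)
      = (\<integral>\<^sup>+x. (\<integral>\<^sup>+y. ennreal (K x y) * v y * indicator {0<..} y * indicator {0<..} x \<partial>lborel) \<partial>lborel)"
    by (intro nn_integral_cong nn_integral_multc[symmetric]) auto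
  also have "\<dots> = (\<integral>\<^sup>+y. (\<integral>\<^sup>+x. ennreal (K x y) * v y * indicator {0<..} y
      * indicator {0<..} x \<partial>lborel) \<partial>lborel)"
    by (rule lborel_pair.Fubini'[symmetric]) measurable
  also have "\<dots> = (\<integral>\<^sup>+y\<in>{0<..}. v y * (\<integral>\<^sup>+x\<in>{0<..}. ennreal (K x y) \<partial>lborel) \<partial>lborel)"
    by (intro nn_integral_cong) (simp add: nn_integral_cmult[symmetric] nn_integral_multc[symmetric] mult_ac)
  also have "\<dots> \<le> (\<integral>\<^sup>+y\<in>{0<..}. v y * ennreal B \<partial>lborel)"
    using col by (intro nn_integral_mono) (auto split: split_indicator intro: mult_left_mono)
  also have "\<dots> = ennreal B * (\<integral>\<^sup>+y\<in>{0<..}. v y \<partial>lborel)"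
    by (simp add: nn_integral_cmult[symmetric] mult_ac)
  finally show ?thesis .
qed

lemma nn_integral_kernel_Cauchy_Schwarz:
  fixes K :: "real \<Rightarrow> real \<Rightarrow> real" and u :: "real \<Rightarrow> ennreal"
  assumes [measurable]: "(\<lambda>(x, y). K x y) \<in> borel_measurable (lborel \<Otimes>\<^sub>M lborel)" "u \<in> borel_measurable lborel"
    and nonneg: "\<And>x y. 0 \<le> K x y"
  shows "(\<integral>\<^sup>+y\<in>{0<..}. ennreal (K x y) * u y \<partial>lborel)\<^sup>2
    \<le> (\<integral>\<^sup>+y\<in>{0<..}. ennreal (K x y) \<partial>lborel) * (\<integral>\<^sup>+y\<in>{0<..}. ennreal (K x y) * (u y)\<^sup>2 \<partial>lborel)"
proof -
  define w where "w y = ennreal (sqrt (K x y)) * indicator {0<..} y" for y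
  have [measurable]: "w \<in> borel_measurable lborel" unfolding w_def by measurable
  have sq: "(w y)\<^sup>2 = ennreal (K x y) * indicator {0<..} y" for y
    using nonneg[of x y] by (auto simp: w_def power_mult_distrib ennreal_power split: split_indicator)
  have "(\<integral>\<^sup>+y\<in>{0<..}. ennreal (K x y) * u y \<partial>lborel) = (\<integral>\<^sup>+y. w y * (w y * u y) \<partial>lborel)"
    by (intro nn_integral_cong) (simp add: sq[symmetric] power2_eq_square mult_ac)
  also have "\<dots>\<^sup>2 \<le> (\<integral>\<^sup>+y. (w y)\<^sup>2 \<partial>lborel) * (\<integral>\<^sup>+y. (w y * u y)\<^sup>2 \<partial>lborel)"
    by (rule Cauchy_Schwarz_nn_integral) measurable
  also have "\<dots> = (\<integral>\<^sup>+y\<in>{0<..}. ennreal (K x y) \<partial>lborel)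
      * (\<integral>\<^sup>+y\<in>{0<..}. ennreal (K x y) * (u y)\<^sup>2 \<partial>lborel)"
    by (simp add: sq power_mult_distrib mult_ac)
  finally show ?thesis .
qed

lemma nn_integral_kernel_square_le:
  fixes K :: "real \<Rightarrow> real \<Rightarrow> real" and u :: "real \<Rightarrow> ennreal"
  assumes [measurable]: "(\<lambda>(x, y). K x y) \<in> borel_measurable (lborel \<Otimes>\<^sub>M lborel)" "u \<in> borel_measurable lborel"
    and nonneg: "\<And>x y. 0 \<le> K x y" and "0 \<le> A" "0 \<le> B"
    and row: "\<And>x. 0 < x \<Longrightarrow> (\<integral>\<^sup>+y\<in>{0<..}. ennreal (K x y) \<partial>lborel) \<le> ennreal A"
    and col: "\<And>y. 0 < y \<Longrightarrow> (\<integral>\<^sup>+x\<in>{0<..}. ennreal (K x y) \<partial>lborel) \<le> ennreal B"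
  shows "(\<integral>\<^sup>+x\<in>{0<..}. (\<integral>\<^sup>+y\<in>{0<..}. ennreal (K x y) * u y \<partial>lborel)\<^sup>2 \<partial>lborel)
    \<le> ennreal (A * B) * (\<integral>\<^sup>+y\<in>{0<..}. (u y)\<^sup>2 \<partial>lborel)"
proof -
  have "(\<integral>\<^sup>+y\<in>{0<..}. ennreal (K x y) * u y \<partial>lborel)\<^sup>2 * indicator {0<..} x
      \<le> ennreal A * ((\<integral>\<^sup>+y\<in>{0<..}. ennreal (K x y) * (u y)\<^sup>2 \<partial>lborel) * indicator {0<..} x)" for x
  proof (cases "0 < x")
    case True
    have "(\<integral>\<^sup>+y\<in>{0<..}. ennreal (K x y) * u y \<partial>lborel)\<^sup>2
        \<le> (\<integral>\<^sup>+y\<in>{0<..}. ennreal (K x y) \<partial>lborel) * (\<integral>\<^sup>+y\<in>{0<..}. ennreal (K x y) * (u y)\<^sup>2 \<partial>lborel)"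
      using nonneg by (intro nn_integral_kernel_Cauchy_Schwarz) auto
    also have "\<dots> \<le> ennreal A * (\<integral>\<^sup>+y\<in>{0<..}. ennreal (K x y) * (u y)\<^sup>2 \<partial>lborel)"
      using row[OF True] by (rule mult_right_mono) simp
    finally show ?thesis using True by simp
  qed simp
  then have "(\<integral>\<^sup>+x\<in>{0<..}. (\<integral>\<^sup>+y\<in>{0<..}. ennreal (K x y) * u y \<partial>lborel)\<^sup>2 \<partial>lborel)
      \<le> ennreal A * (\<integral>\<^sup>+x\<in>{0<..}. (\<integral>\<^sup>+y\<in>{0<..}. ennreal (K x y) * (u y)\<^sup>2 \<partial>lborel) \<partial>lborel)"
    by (subst nn_integral_cmult[symmetric]) (auto intro: nn_integral_mono)
  also have "\<dots> \<le> ennreal A * (ennreal B * (\<integral>\<^sup>+y\<in>{0<..}. (u y)\<^sup>2 \<partial>lborel))"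
    using col by (intro mult_left_mono nn_integral_kernel_swap_le) auto
  finally show ?thesis using \<open>0 \<le> A\<close> \<open>0 \<le> B\<close> by (simp add: ennreal_mult mult.assoc)
qed

lemma nn_integral_kernel_apply_L2_le:
  fixes K :: "real \<Rightarrow> real \<Rightarrow> real"
  assumes [measurable]: "(\<lambda>(x, y). K x y) \<in> borel_measurable (lborel \<Otimes>\<^sub>M lborel)"
    and nonneg: "\<And>x y. 0 \<le> K x y" and "0 \<le> A" "0 \<le> B"
    and row: "\<And>x. 0 < x \<Longrightarrow> (\<integral>\<^sup>+y\<in>{0<..}. ennreal (K x y) \<partial>lborel) \<le> ennreal A"
    and col: "\<And>y. 0 < y \<Longrightarrow> (\<integral>\<^sup>+x\<in>{0<..}. ennreal (K x y) \<partial>lborel) \<le> ennreal B"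
    and f: "f \<in> L2pos"
  shows "(\<integral>\<^sup>+x\<in>{0<..}. (\<integral>\<^sup>+y\<in>{0<..}. ennreal (K x y) * ennreal (cmod (f y)) \<partial>lborel)\<^sup>2 \<partial>lborel)
    \<le> ennreal (A * B * (L2norm f)\<^sup>2)"
proof -
  have [measurable]: "f \<in> borel_measurable lborel" using f by (simp add: L2pos_def)
  have "(\<integral>\<^sup>+x\<in>{0<..}. (\<integral>\<^sup>+y\<in>{0<..}. ennreal (K x y) * ennreal (cmod (f y)) \<partial>lborel)\<^sup>2 \<partial>lborel)
      \<le> ennreal (A * B) * (\<integral>\<^sup>+y\<in>{0<..}. (ennreal (cmod (f y)))\<^sup>2 \<partial>lborel)"
    using assms by (intro nn_integral_kernel_square_le) auto
  also have "(\<integral>\<^sup>+y\<in>{0<..}. (ennreal (cmod (f y)))\<^sup>2 \<partial>lborel) = ennreal ((L2norm f)\<^sup>2)"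
    using L2pos_nn_integral[OF f] by (simp add: ennreal_power)
  finally show ?thesis using assms by (simp add: ennreal_mult)
qed

lemma norm_int_op_le:
  assumes "\<And>y. 0 \<le> K x y"
  shows "ennreal (cmod (int_op K f x)) \<le> (\<integral>\<^sup>+y\<in>{0<..}. ennreal (K x y) * ennreal (cmod (f y)) \<partial>lborel)"
proof (cases "set_integrable lborel {0<..} (\<lambda>y. complex_of_real (K x y) * f y)")
  case True
  have "ennreal (cmod (int_op K f x))
      \<le> (\<integral>\<^sup>+y. norm (indicator {0<..} y *\<^sub>R (complex_of_real (K x y) * f y)) \<partial>lborel)"
    using True unfolding int_op_def set_lebesgue_integral_def set_integrable_def
    by (rule integral_norm_bound_ennreal)
  also have "\<dots> = (\<integral>\<^sup>+y\<in>{0<..}. ennreal (K x y) * ennreal (cmod (f y)) \<partial>lborel)"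
    using assms by (intro nn_integral_cong) (auto simp: norm_mult ennreal_mult split: split_indicator)
  finally show ?thesis .
next
  case False
  then show ?thesis
    by (simp add: int_op_def set_lebesgue_integral_def set_integrable_def not_integrable_integral_eq)
qed

lemma L2_bounded_by_Schur_test:
  fixes K :: "real \<Rightarrow> real \<Rightarrow> real"
  assumes [measurable]: "(\<lambda>(x, y). K x y) \<in> borel_measurable (lborel \<Otimes>\<^sub>M lborel)"
    and nonneg: "\<And>x y. 0 \<le> K x y" and "0 \<le> A" "0 \<le> B"
    and row: "\<And>x. 0 < x \<Longrightarrow> (\<integral>\<^sup>+y\<in>{0<..}. ennreal (K x y) \<partial>lborel) \<le> ennreal A"
    and col: "\<And>y. 0 < y \<Longrightarrow> (\<integral>\<^sup>+x\<in>{0<..}. ennreal (K x y) \<partial>lborel) \<le> ennreal B"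
  shows "L2_bounded_by (sqrt (A * B)) K"
  unfolding L2_bounded_by_def
proof (intro ballI conjI)
  fix f assume f: "f \<in> L2pos"
  then have [measurable]: "f \<in> borel_measurable lborel" by (simp add: L2pos_def)
  define J where "J x = (\<integral>\<^sup>+y\<in>{0<..}. ennreal (K x y) * ennreal (cmod (f y)) \<partial>lborel)" for x
  have [measurable]: "J \<in> borel_measurable lborel" unfolding J_def by measurable
  define N where "N = A * B * (L2norm f)\<^sup>2"
  have "N \<ge> 0" using assms by (simp add: N_def)
  have J: "(\<integral>\<^sup>+x\<in>{0<..}. (J x)\<^sup>2 \<partial>lborel) \<le> ennreal N"
    unfolding J_def N_def using assms f by (intro nn_integral_kernel_apply_L2_le) auto
  have "AE x in lborel. (J x)\<^sup>2 * indicator {0<..} x \<noteq> \<infinity>"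
    using J by (intro nn_integral_PInf_AE) (auto simp: top_unique)
  then show "AE x in lborel. 0 < x \<longrightarrow> set_integrable lborel {0<..} (\<lambda>\<rho>. complex_of_real (K x \<rho>) * f \<rho>)"
  proof (rule AE_mp, intro AE_I2 impI)
    fix x :: real assume "(J x)\<^sup>2 * indicator {0<..} x \<noteq> \<infinity>" and "0 < x"
    then have "J x < \<infinity>" by (simp add: less_top power_eq_top_ennreal)
    moreover have
      "(\<integral>\<^sup>+y. ennreal (norm (indicator {0<..} y *\<^sub>R (complex_of_real (K x y) * f y))) \<partial>lborel) = J x"
      unfolding J_def using nonneg
      by (intro nn_integral_cong) (auto simp: norm_mult ennreal_mult split: split_indicator)
    ultimately show "set_integrable lborel {0<..} (\<lambda>\<rho>. complex_of_real (K x \<rho>) * f \<rho>)"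
      unfolding set_integrable_def by (intro integrableI_bounded) auto
  qed
  have [measurable]: "int_op K f \<in> borel_measurable lborel"
    unfolding int_op_def set_lebesgue_integral_def by measurable
  have "(\<integral>\<^sup>+x\<in>{0<..}. ennreal ((cmod (int_op K f x))\<^sup>2) \<partial>lborel) \<le> (\<integral>\<^sup>+x\<in>{0<..}. (J x)\<^sup>2 \<partial>lborel)"
    using norm_int_op_le[of K _ f] nonneg
    by (intro nn_integral_mono mult_right_mono) (auto simp: J_def ennreal_power[symmetric] intro: power_mono)
  also note J
  finally have T: "(\<integral>\<^sup>+x\<in>{0<..}. ennreal ((cmod (int_op K f x))\<^sup>2) \<partial>lborel) \<le> ennreal N" .
  show "int_op K f \<in> L2pos" using L2pos_of_nn_integral_le(1)[OF _ T \<open>N \<ge> 0\<close>] by simp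
  have "L2norm (int_op K f) \<le> sqrt N" using L2pos_of_nn_integral_le(2)[OF _ T \<open>N \<ge> 0\<close>] by simp
  also have "sqrt N = sqrt (A * B) * L2norm f"
    using L2norm_nonneg[of f] by (simp add: N_def real_sqrt_mult)
  finally show "L2norm (int_op K f) \<le> sqrt (A * B) * L2norm f" .
qed

lemma integrable_kernel_sesquilinear_form:
  fixes K :: "real \<Rightarrow> real \<Rightarrow> real"
  assumes [measurable]: "(\<lambda>(x, y). K x y) \<in> borel_measurable (lborel \<Otimes>\<^sub>M lborel)"
    and nonneg: "\<And>x y. 0 \<le> K x y" and "0 \<le> A" "0 \<le> B"
    and row: "\<And>x. 0 < x \<Longrightarrow> (\<integral>\<^sup>+y\<in>{0<..}. ennreal (K x y) \<partial>lborel) \<le> ennreal A"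
    and col: "\<And>y. 0 < y \<Longrightarrow> (\<integral>\<^sup>+x\<in>{0<..}. ennreal (K x y) \<partial>lborel) \<le> ennreal B"
    and f: "f \<in> L2pos" and g: "g \<in> L2pos"
  shows "integrable (lborel \<Otimes>\<^sub>M lborel)
    (\<lambda>(x, y). (indicator {0<..} x * indicator {0<..} y * K x y) *\<^sub>R (f y * cnj (g x)))"
proof -
  have [measurable]: "f \<in> borel_measurable lborel" "g \<in> borel_measurable lborel"
    using f g by (simp_all add: L2pos_def)
  define H where "H x y
      = (indicator {0<..} x * indicator {0<..} y * K x y) *\<^sub>R (f y * cnj (g x))" for x y
  define J where "J x = (\<integral>\<^sup>+y\<in>{0<..}. ennreal (K x y) * ennreal (cmod (f y)) \<partial>lborel)" for x
  have [measurable]: "J \<in> borel_measurable lborel" unfolding J_def by measurable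
  have inner: "(\<integral>\<^sup>+y. ennreal (norm (H x y)) \<partial>lborel)
      = (J x * indicator {0<..} x) * (ennreal (cmod (g x)) * indicator {0<..} x)" for x
  proof -
    have "(\<integral>\<^sup>+y. ennreal (norm (H x y)) \<partial>lborel)
        = (\<integral>\<^sup>+y\<in>{0<..}. ennreal (K x y) * ennreal (cmod (f y))
            * (ennreal (cmod (g x)) * indicator {0<..} x) \<partial>lborel)"
      using nonneg unfolding H_def
      by (intro nn_integral_cong) (auto simp: norm_mult ennreal_mult mult_ac split: split_indicator)
    also have "\<dots> = J x * (ennreal (cmod (g x)) * indicator {0<..} x)"
      unfolding J_def by (subst nn_integral_multc[symmetric]) (auto simp: mult_ac)
    finally show ?thesis by (simp split: split_indicator)
  qed
  have ind: "(indicator {0<..} x :: ennreal)\<^sup>2 = indicator {0<..} x" for x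
    by (simp split: split_indicator)
  have "(\<integral>\<^sup>+x. (\<integral>\<^sup>+y. ennreal (norm (H x y)) \<partial>lborel) \<partial>lborel)\<^sup>2
      \<le> (\<integral>\<^sup>+x. (J x * indicator {0<..} x)\<^sup>2 \<partial>lborel)
          * (\<integral>\<^sup>+x. (ennreal (cmod (g x)) * indicator {0<..} x)\<^sup>2 \<partial>lborel)"
    unfolding inner by (rule Cauchy_Schwarz_nn_integral) measurable
  also have "\<dots> = (\<integral>\<^sup>+x\<in>{0<..}. (J x)\<^sup>2 \<partial>lborel) * ennreal ((L2norm g)\<^sup>2)"
    using L2pos_nn_integral[OF g] by (simp add: power_mult_distrib ennreal_power ind)
  also have "\<dots> \<le> ennreal (A * B * (L2norm f)\<^sup>2) * ennreal ((L2norm g)\<^sup>2)"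
    unfolding J_def using assms by (intro mult_right_mono nn_integral_kernel_apply_L2_le) auto
  also have "\<dots> < \<infinity>" by (simp add: ennreal_mult_less_top)
  finally have "(\<integral>\<^sup>+x. (\<integral>\<^sup>+y. ennreal (norm (H x y)) \<partial>lborel) \<partial>lborel) < \<infinity>"
    by (simp add: power_less_top_ennreal)
  then have "(\<integral>\<^sup>+z. ennreal (norm (case z of (x, y) \<Rightarrow> H x y)) \<partial>(lborel \<Otimes>\<^sub>M lborel)) < \<infinity>"
    unfolding H_def by (subst lborel.nn_integral_fst[symmetric]) (auto simp: case_prod_beta)
  then show ?thesis
    unfolding H_def by (intro integrableI_bounded) auto
qed

lemma integral_kernel_form_over_y:
  "(\<integral>y. (indicator {0<..} x * indicator {0<..} y * K x y) *\<^sub>R (f y * cnj (g x)) \<partial>lborel)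
    = indicator {0<..} x *\<^sub>R (int_op K f x * cnj (g x))"
proof -
  have "(\<integral>y. (indicator {0<..} x * indicator {0<..} y * K x y) *\<^sub>R (f y * cnj (g x)) \<partial>lborel)
      = (\<integral>y. (indicator {0<..} y *\<^sub>R (complex_of_real (K x y) * f y))
          * (indicator {0<..} x *\<^sub>R cnj (g x)) \<partial>lborel)"
    by (intro Bochner_Integration.integral_cong) (auto simp: scaleR_conv_of_real)
  also have "\<dots> = (\<integral>y. indicator {0<..} y *\<^sub>R (complex_of_real (K x y) * f y) \<partial>lborel)
      * (indicator {0<..} x *\<^sub>R cnj (g x))"
    by (rule integral_mult_left_zero)
  finally show ?thesis by (simp add: int_op_def set_lebesgue_integral_def split: split_indicator)
qed

lemma integral_kernel_form_over_x:
  "(\<integral>x. (indicator {0<..} x * indicator {0<..} y * K x y) *\<^sub>R (f y * cnj (g x)) \<partial>lborel)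
    = indicator {0<..} y *\<^sub>R (f y * cnj (int_op (\<lambda>y x. K x y) g y))"
proof -
  have "(\<integral>x. (indicator {0<..} x * indicator {0<..} y * K x y) *\<^sub>R (f y * cnj (g x)) \<partial>lborel)
      = (\<integral>x. (indicator {0<..} y *\<^sub>R f y)
          * cnj (indicator {0<..} x *\<^sub>R (complex_of_real (K x y) * g x)) \<partial>lborel)"
    by (intro Bochner_Integration.integral_cong) (auto simp: scaleR_conv_of_real)
  also have "\<dots> = (indicator {0<..} y *\<^sub>R f y)
      * cnj (\<integral>x. indicator {0<..} x *\<^sub>R (complex_of_real (K x y) * g x) \<partial>lborel)"
    by (simp only: integral_mult_right_zero Bochner_Integration.integral_cnj)
  finally show ?thesis by (simp add: int_op_def set_lebesgue_integral_def split: split_indicator)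
qed

lemma L2_selfadjoint_of_symmetric_kernel:
  fixes K :: "real \<Rightarrow> real \<Rightarrow> real"
  assumes [measurable]: "(\<lambda>(x, y). K x y) \<in> borel_measurable (lborel \<Otimes>\<^sub>M lborel)"
    and nonneg: "\<And>x y. 0 \<le> K x y" and symmetric: "\<And>x y. K x y = K y x" and "0 \<le> A"
    and row: "\<And>x. 0 < x \<Longrightarrow> (\<integral>\<^sup>+y\<in>{0<..}. ennreal (K x y) \<partial>lborel) \<le> ennreal A"
  shows "L2_selfadjoint K"
proof -
  have col: "(\<integral>\<^sup>+x\<in>{0<..}. ennreal (K x y) \<partial>lborel) \<le> ennreal A" if "0 < y" for y
    by (subst symmetric) (rule row[OF that])
  have "L2_bounded K"
    using L2_bounded_by_Schur_test[OF _ nonneg \<open>0 \<le> A\<close> \<open>0 \<le> A\<close> row col]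
    unfolding L2_bounded_def by auto
  moreover have "(LINT x:{0<..}|lborel. int_op K f x * cnj (g x))
      = (LINT x:{0<..}|lborel. f x * cnj (int_op K g x))"
    if "f \<in> L2pos" and "g \<in> L2pos" for f g
  proof -
    define H where "H x y
        = (indicator {0<..} x * indicator {0<..} y * K x y) *\<^sub>R (f y * cnj (g x))" for x y
    have int: "integrable (lborel \<Otimes>\<^sub>M lborel) (\<lambda>(x, y). H x y)"
      unfolding H_def using nonneg \<open>0 \<le> A\<close> row col that
      by (intro integrable_kernel_sesquilinear_form) auto
    have transpose: "(\<lambda>y x. K x y) = K" using symmetric by (intro ext) simp
    have "(LINT x:{0<..}|lborel. int_op K f x * cnj (g x)) = (\<integral>x. (\<integral>y. H x y \<partial>lborel) \<partial>lborel)"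
      unfolding set_lebesgue_integral_def H_def integral_kernel_form_over_y ..
    also have "\<dots> = (\<integral>y. (\<integral>x. H x y \<partial>lborel) \<partial>lborel)"
      using lborel_pair.integral_fst[OF int] lborel_pair.integral_snd[OF int] by simp
    also have "\<dots> = (LINT y:{0<..}|lborel. f y * cnj (int_op K g y))"
      unfolding set_lebesgue_integral_def H_def integral_kernel_form_over_x transpose ..
    finally show ?thesis .
  qed
  ultimately show ?thesis unfolding L2_selfadjoint_def by blast
qed

section \<open>The Green kernel\<close>

definition green_kernel :: "real \<Rightarrow> real \<Rightarrow> real \<Rightarrow> real \<Rightarrow> real \<Rightarrow> real" where
  "green_kernel \<alpha> \<kappa> a x \<rho> =
     (if 0 < x \<and> 0 < \<rho> \<and> x \<noteq> \<rho> then
        (1 + \<alpha>) * \<kappa> * x powr (a - \<alpha>/2) * \<rho> powr (-\<alpha>/2)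
          * (exp (-\<kappa> * max x \<rho> powr (1 + \<alpha>)) * sinh (\<kappa> * min x \<rho> powr (1 + \<alpha>)))
      else 0)"

lemma Phi_mult_F:
  fixes \<alpha> s t :: real
  assumes "0 < \<alpha>" and "k \<noteq> 0"
  defines "\<kappa> \<equiv> \<bar>real_of_int k\<bar> / (1 + \<alpha>)"
  shows "(real_of_int k)\<^sup>2 * (Phi \<alpha> k s * F \<alpha> k t / (1 + \<alpha>))
    = (1 + \<alpha>) * \<kappa> * (s powr (-\<alpha>/2) * t powr (-\<alpha>/2)
        * (exp (-\<kappa> * s powr (1 + \<alpha>)) * sinh (\<kappa> * t powr (1 + \<alpha>))))"
proof -
  define c where "c = \<bar>real_of_int k\<bar>"
  have c: "0 < c" using assms by (simp add: c_def)
  have "sqrt (pi * (1 + \<alpha>) / (2 * c)) * sqrt (2 * (1 + \<alpha>) / (pi * c)) = sqrt (((1 + \<alpha>) / c)\<^sup>2)"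
    unfolding real_sqrt_mult[symmetric] using c by (simp add: field_simps power2_eq_square)
  also have "\<dots> = (1 + \<alpha>) / c" using assms c by simp
  finally have const: "sqrt (pi * (1 + \<alpha>) / (2 * c)) * sqrt (2 * (1 + \<alpha>) / (pi * c)) = (1 + \<alpha>) / c" .
  have "Phi \<alpha> k s * F \<alpha> k t = sqrt (pi * (1 + \<alpha>) / (2 * c)) * sqrt (2 * (1 + \<alpha>) / (pi * c))
      * (s powr (-\<alpha>/2) * t powr (-\<alpha>/2) * (exp (-\<kappa> * s powr (1 + \<alpha>)) * sinh (\<kappa> * t powr (1 + \<alpha>))))"
    unfolding Phi_def F_def \<kappa>_def c_def by (simp only: mult_ac)
  also have "\<dots> = (1 + \<alpha>) / c * (s powr (-\<alpha>/2) * t powr (-\<alpha>/2)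
      * (exp (-\<kappa> * s powr (1 + \<alpha>)) * sinh (\<kappa> * t powr (1 + \<alpha>))))"
    by (simp only: const)
  moreover have "(real_of_int k)\<^sup>2 = c * c" by (simp add: c_def flip: power2_eq_square)
  ultimately show ?thesis using assms c by (simp add: \<kappa>_def c_def[symmetric])
qed

lemma Gker_eq_green_kernel:
  assumes "0 < \<alpha>" and "k \<noteq> 0"
  shows "Gker a \<alpha> k = green_kernel \<alpha> (\<bar>real_of_int k\<bar> / (1 + \<alpha>)) a"
proof (intro ext)
  fix x \<rho> :: real
  define \<kappa> where "\<kappa> = \<bar>real_of_int k\<bar> / (1 + \<alpha>)"
  note PhiF = Phi_mult_F[OF assms, folded \<kappa>_def]
  have x: "x powr a * ((1 + \<alpha>) * \<kappa> * (x powr (-\<alpha>/2) * \<rho> powr (-\<alpha>/2) * E))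
      = (1 + \<alpha>) * \<kappa> * x powr (a - \<alpha>/2) * \<rho> powr (-\<alpha>/2) * E" for E
  proof -
    have "x powr a * ((1 + \<alpha>) * \<kappa> * (x powr (-\<alpha>/2) * \<rho> powr (-\<alpha>/2) * E))
        = (1 + \<alpha>) * \<kappa> * (x powr a * x powr (-\<alpha>/2)) * \<rho> powr (-\<alpha>/2) * E"
      by (simp only: mult_ac)
    also have "x powr a * x powr (-\<alpha>/2) = x powr (a - \<alpha>/2)" by (simp add: powr_add[symmetric])
    finally show ?thesis .
  qed
  consider "0 < \<rho>" "\<rho> < x" | "0 < x" "x < \<rho>" | "\<not> (0 < \<rho> \<and> \<rho> < x)" "\<not> (0 < x \<and> x < \<rho>)"
    by blast
  then show "Gker a \<alpha> k x \<rho> = green_kernel \<alpha> \<kappa> a x \<rho>"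
  proof cases
    case 1
    then have "Gker a \<alpha> k x \<rho> = x powr a * ((real_of_int k)\<^sup>2 * (Phi \<alpha> k x * F \<alpha> k \<rho> / (1 + \<alpha>)))"
      by (simp add: Gker_def G_def)
    then show ?thesis using 1 by (simp only: PhiF x) (simp add: green_kernel_def)
  next
    case 2
    then have "Gker a \<alpha> k x \<rho> = x powr a * ((real_of_int k)\<^sup>2 * (Phi \<alpha> k \<rho> * F \<alpha> k x / (1 + \<alpha>)))"
      by (simp add: Gker_def G_def mult.commute)
    then show ?thesis using 2
      by (simp only: PhiF mult.commute[of "\<rho> powr (-\<alpha>/2)"] x) (simp add: green_kernel_def)
  next
    case 3
    then show ?thesis by (auto simp: Gker_def G_def green_kernel_def)
  qed
qed

lemma borel_measurable_sinh [measurable]: "(sinh :: real \<Rightarrow> real) \<in> borel_measurable borel"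
  by (intro borel_measurable_continuous_onI continuous_intros)

lemma borel_measurable_green_kernel [measurable]:
  "(\<lambda>(x, \<rho>). green_kernel \<alpha> \<kappa> a x \<rho>) \<in> borel_measurable (lborel \<Otimes>\<^sub>M lborel)"
  unfolding green_kernel_def by measurable

lemma green_kernel_nonneg: "0 \<le> \<alpha> \<Longrightarrow> 0 \<le> \<kappa> \<Longrightarrow> 0 \<le> green_kernel \<alpha> \<kappa> a x \<rho>"
  by (simp add: green_kernel_def)

lemma green_kernel_symmetric: "green_kernel \<alpha> \<kappa> 0 x \<rho> = green_kernel \<alpha> \<kappa> 0 \<rho> x"
  by (auto simp: green_kernel_def max.commute min.commute mult_ac)

lemma green_kernel_rescale: "green_kernel \<alpha> \<kappa> a x \<rho> = x powr (a - b) * green_kernel \<alpha> \<kappa> b x \<rho>"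
  by (simp add: green_kernel_def powr_add[symmetric])

lemma green_kernel_mono_exponent:
  assumes "1 \<le> x" "a \<le> b" "0 \<le> \<alpha>" "0 \<le> \<kappa>"
  shows "green_kernel \<alpha> \<kappa> a x \<rho> \<le> green_kernel \<alpha> \<kappa> b x \<rho>"
proof -
  have "x powr (a - b) \<le> 1" using assms powr_mono[of "a - b" 0 x] by simp
  with green_kernel_nonneg[of \<alpha> \<kappa> b x \<rho>] assms show ?thesis
    using green_kernel_rescale[of \<alpha> \<kappa> a x \<rho> b] by (simp add: mult_left_le_one_le)
qed

lemma green_kernel_le_exp_abs:
  assumes "0 \<le> \<alpha>" "0 \<le> \<kappa>" "0 < x"
  shows "green_kernel \<alpha> \<kappa> a x \<rho> \<le> (1 + \<alpha>) * \<kappa>\<^sup>2 * x powr (a + 1) * exp (-\<kappa> * x powr \<alpha> * \<bar>x - \<rho>\<bar>)"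
proof (cases "0 < \<rho> \<and> \<rho> \<noteq> x")
  case False
  then show ?thesis using assms by (auto simp: green_kernel_def)
next
  case True
  then have \<rho>: "0 < \<rho>" by simp
  have weight: "\<rho> powr (-\<alpha>/2) * min x \<rho> powr (1 + \<alpha>) \<le> x powr (1 + \<alpha>/2)"
  proof (cases "\<rho> \<le> x")
    case True
    have "\<rho> powr (-\<alpha>/2) * \<rho> powr (1 + \<alpha>) = \<rho> powr (1 + \<alpha>/2)"
      by (simp add: powr_add[symmetric] add.commute)
    also have "\<dots> \<le> x powr (1 + \<alpha>/2)" using True \<rho> assms by (intro powr_mono2) auto
    finally show ?thesis using True by (simp add: min_absorb2)
  next
    case False
    have "\<rho> powr (-\<alpha>/2) * x powr (1 + \<alpha>) \<le> x powr (-\<alpha>/2) * x powr (1 + \<alpha>)"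
      using False assms by (intro mult_right_mono powr_mono2') auto
    also have "\<dots> = x powr (1 + \<alpha>/2)" by (simp add: powr_add[symmetric] add.commute)
    finally show ?thesis using False by (simp add: min_absorb1)
  qed
  have decay: "exp (-\<kappa> * max x \<rho> powr \<alpha> * \<bar>x - \<rho>\<bar>) \<le> exp (-\<kappa> * x powr \<alpha> * \<bar>x - \<rho>\<bar>)"
    using assms by (auto intro!: mult_right_mono mult_left_mono powr_mono2)
  have "green_kernel \<alpha> \<kappa> a x \<rho> = (1 + \<alpha>) * \<kappa> * x powr (a - \<alpha>/2) * \<rho> powr (-\<alpha>/2)
      * (exp (-\<kappa> * max x \<rho> powr (1 + \<alpha>)) * sinh (\<kappa> * min x \<rho> powr (1 + \<alpha>)))"
    using True assms by (simp add: green_kernel_def)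
  also have "\<dots> \<le> (1 + \<alpha>) * \<kappa> * x powr (a - \<alpha>/2) * \<rho> powr (-\<alpha>/2)
      * (\<kappa> * min x \<rho> powr (1 + \<alpha>) * exp (-\<kappa> * max x \<rho> powr \<alpha> * \<bar>x - \<rho>\<bar>))"
    using exp_max_sinh_min_le(2)[of x \<rho> \<kappa> \<alpha>] assms \<rho> by (intro mult_left_mono) auto
  also have "\<dots> = (1 + \<alpha>) * \<kappa>\<^sup>2 * x powr (a - \<alpha>/2) * (\<rho> powr (-\<alpha>/2) * min x \<rho> powr (1 + \<alpha>))
      * exp (-\<kappa> * max x \<rho> powr \<alpha> * \<bar>x - \<rho>\<bar>)"
    by (simp add: power2_eq_square mult_ac)
  also have "\<dots> \<le> (1 + \<alpha>) * \<kappa>\<^sup>2 * x powr (a - \<alpha>/2) * x powr (1 + \<alpha>/2) * exp (-\<kappa> * x powr \<alpha> * \<bar>x - \<rho>\<bar>)"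
    using assms weight decay by (intro mult_mono mult_left_mono) auto
  also have "\<dots> = (1 + \<alpha>) * \<kappa>\<^sup>2 * x powr (a + 1) * exp (-\<kappa> * x powr \<alpha> * \<bar>x - \<rho>\<bar>)"
    by (simp add: powr_add[symmetric])
  finally show ?thesis .
qed

lemma green_kernel_2alpha_eq:
  "green_kernel \<alpha> \<kappa> (2*\<alpha>) x \<rho> = (if 0 < x \<and> 0 < \<rho> \<and> x \<noteq> \<rho> then
     (1 + \<alpha>) * \<kappa> * x powr (3*\<alpha>/2) * \<rho> powr (-\<alpha>/2)
       * (exp (-\<kappa> * max x \<rho> powr (1 + \<alpha>)) * sinh (\<kappa> * min x \<rho> powr (1 + \<alpha>))) else 0)"
  by (simp add: green_kernel_def)

lemma green_kernel_2alpha_far: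
  assumes "0 \<le> \<alpha>" "0 \<le> \<kappa>" "0 < \<rho>" "2 * \<rho> \<le> x"
  shows "green_kernel \<alpha> \<kappa> (2*\<alpha>) x \<rho>
      \<le> (1 + \<alpha>) * \<kappa> / 2 * x powr (3*\<alpha>/2) * exp (-\<kappa>/2 * x powr (1 + \<alpha>)) * \<rho> powr (-\<alpha>/2)"
    and "green_kernel \<alpha> \<kappa> (2*\<alpha>) x \<rho> \<le> (1 + \<alpha>) * \<kappa>\<^sup>2 * x powr (1 + 2*\<alpha>) * exp (-\<kappa>/2 * x powr (1 + \<alpha>))"
proof -
  have x: "0 < x" "x \<noteq> \<rho>" "max x \<rho> = x" "min x \<rho> = \<rho>" using assms by auto
  define E where "E = exp (-\<kappa> * x powr (1 + \<alpha>)) * sinh (\<kappa> * \<rho> powr (1 + \<alpha>))"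
  have K: "green_kernel \<alpha> \<kappa> (2*\<alpha>) x \<rho> = (1 + \<alpha>) * \<kappa> * x powr (3*\<alpha>/2) * \<rho> powr (-\<alpha>/2) * E"
    using x assms by (simp add: green_kernel_2alpha_eq E_def)
  have decay: "exp (-\<kappa> * x powr \<alpha> * \<bar>x - \<rho>\<bar>) \<le> exp (-\<kappa>/2 * x powr (1 + \<alpha>))"
    using assms x by (intro exp_decay_far_from_diagonal) auto
  have "E \<le> exp (-\<kappa> * x powr \<alpha> * \<bar>x - \<rho>\<bar>) / 2"
    using exp_max_sinh_min_le(1)[of x \<rho> \<kappa> \<alpha>] x assms by (simp add: E_def)
  with decay have "E \<le> exp (-\<kappa>/2 * x powr (1 + \<alpha>)) / 2" by linarith
  then have "green_kernel \<alpha> \<kappa> (2*\<alpha>) x \<rho>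
      \<le> (1 + \<alpha>) * \<kappa> * x powr (3*\<alpha>/2) * \<rho> powr (-\<alpha>/2) * (exp (-\<kappa>/2 * x powr (1 + \<alpha>)) / 2)"
    unfolding K using assms by (intro mult_left_mono) auto
  then show "green_kernel \<alpha> \<kappa> (2*\<alpha>) x \<rho>
      \<le> (1 + \<alpha>) * \<kappa> / 2 * x powr (3*\<alpha>/2) * exp (-\<kappa>/2 * x powr (1 + \<alpha>)) * \<rho> powr (-\<alpha>/2)"
    by (simp add: mult_ac)
  have "E \<le> \<kappa> * \<rho> powr (1 + \<alpha>) * exp (-\<kappa> * x powr \<alpha> * \<bar>x - \<rho>\<bar>)"
    using exp_max_sinh_min_le(2)[of x \<rho> \<kappa> \<alpha>] x assms by (simp add: E_def)
  also have "\<dots> \<le> \<kappa> * \<rho> powr (1 + \<alpha>) * exp (-\<kappa>/2 * x powr (1 + \<alpha>))"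
    using decay assms by (intro mult_left_mono) auto
  finally have E: "E \<le> \<kappa> * \<rho> powr (1 + \<alpha>) * exp (-\<kappa>/2 * x powr (1 + \<alpha>))" .
  have "\<rho> powr (-\<alpha>/2) * \<rho> powr (1 + \<alpha>) = \<rho> powr (1 + \<alpha>/2)"
    by (simp add: powr_add[symmetric] add.commute)
  also have "\<dots> \<le> x powr (1 + \<alpha>/2)" using assms by (intro powr_mono2) auto
  finally have weight: "\<rho> powr (-\<alpha>/2) * \<rho> powr (1 + \<alpha>) \<le> x powr (1 + \<alpha>/2)" .
  have "green_kernel \<alpha> \<kappa> (2*\<alpha>) x \<rho>
      \<le> (1 + \<alpha>) * \<kappa> * x powr (3*\<alpha>/2) * \<rho> powr (-\<alpha>/2)
          * (\<kappa> * \<rho> powr (1 + \<alpha>) * exp (-\<kappa>/2 * x powr (1 + \<alpha>)))"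
    unfolding K using E assms by (intro mult_left_mono) auto
  also have "\<dots> = (1 + \<alpha>) * \<kappa>\<^sup>2 * x powr (3*\<alpha>/2) * (\<rho> powr (-\<alpha>/2) * \<rho> powr (1 + \<alpha>))
      * exp (-\<kappa>/2 * x powr (1 + \<alpha>))"
    by (simp add: power2_eq_square mult_ac)
  also have "\<dots> \<le> (1 + \<alpha>) * \<kappa>\<^sup>2 * x powr (3*\<alpha>/2) * x powr (1 + \<alpha>/2) * exp (-\<kappa>/2 * x powr (1 + \<alpha>))"
    using weight assms by (intro mult_right_mono mult_left_mono) auto
  also have "\<dots> = (1 + \<alpha>) * \<kappa>\<^sup>2 * x powr (1 + 2*\<alpha>) * exp (-\<kappa>/2 * x powr (1 + \<alpha>))"
    by (simp add: powr_add[symmetric] add.commute)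
  finally show "green_kernel \<alpha> \<kappa> (2*\<alpha>) x \<rho> \<le> (1 + \<alpha>) * \<kappa>\<^sup>2 * x powr (1 + 2*\<alpha>)
      * exp (-\<kappa>/2 * x powr (1 + \<alpha>))" .
qed

lemma green_kernel_2alpha_near:
  assumes "0 \<le> \<alpha>" "\<alpha> \<le> 1" "0 \<le> \<kappa>" "0 < x" "0 < \<rho>" "x < 2 * \<rho>"
  shows "green_kernel \<alpha> \<kappa> (2*\<alpha>) x \<rho> \<le> (1 + \<alpha>) * \<kappa> * x powr \<alpha> * exp (-\<kappa> * x powr \<alpha> * \<bar>x - \<rho>\<bar>)"
    and "green_kernel \<alpha> \<kappa> (2*\<alpha>) x \<rho> \<le> 2 * (1 + \<alpha>) * \<kappa> * \<rho> powr \<alpha> * exp (-\<kappa> * \<rho> powr \<alpha> * \<bar>x - \<rho>\<bar>)"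
proof -
  define E where "E = exp (-\<kappa> * max x \<rho> powr (1 + \<alpha>)) * sinh (\<kappa> * min x \<rho> powr (1 + \<alpha>))"
  have K: "green_kernel \<alpha> \<kappa> (2*\<alpha>) x \<rho> \<le> (1 + \<alpha>) * \<kappa> * x powr (3*\<alpha>/2) * \<rho> powr (-\<alpha>/2) * E"
    using assms by (simp add: green_kernel_2alpha_eq E_def)
  have E: "E \<le> exp (-\<kappa> * max x \<rho> powr \<alpha> * \<bar>x - \<rho>\<bar>) / 2"
    using exp_max_sinh_min_le(1)[of x \<rho> \<kappa> \<alpha>] assms by (simp add: E_def)
  have "exp (-\<kappa> * max x \<rho> powr \<alpha> * \<bar>x - \<rho>\<bar>) \<le> exp (-\<kappa> * y powr \<alpha> * \<bar>x - \<rho>\<bar>)"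
    if "0 < y" "y \<le> max x \<rho>" for y
    using assms that by (auto intro!: mult_right_mono mult_left_mono powr_mono2)
  with E assms have E_x: "E \<le> exp (-\<kappa> * x powr \<alpha> * \<bar>x - \<rho>\<bar>) / 2"
    and E_\<rho>: "E \<le> exp (-\<kappa> * \<rho> powr \<alpha> * \<bar>x - \<rho>\<bar>) / 2"
    by (smt (verit) divide_right_mono max.cobounded1 max.cobounded2)+
  have "\<rho> powr (-\<alpha>/2) \<le> (x/2) powr (-\<alpha>/2)" using assms by (intro powr_mono2') auto
  also have "\<dots> = 2 powr (\<alpha>/2) * x powr (-\<alpha>/2)" using assms
    by (simp add: powr_divide powr_minus field_simps)
  also have "\<dots> \<le> 2 * x powr (-\<alpha>/2)" using powr_mono[of "\<alpha>/2" 1 2] assms by (intro mult_right_mono) auto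
  finally have "\<rho> powr (-\<alpha>/2) \<le> 2 * x powr (-\<alpha>/2)" .
  with K E_x assms have "green_kernel \<alpha> \<kappa> (2*\<alpha>) x \<rho>
      \<le> (1 + \<alpha>) * \<kappa> * x powr (3*\<alpha>/2) * (2 * x powr (-\<alpha>/2)) * (exp (-\<kappa> * x powr \<alpha> * \<bar>x - \<rho>\<bar>) / 2)"
    by (elim order_trans) (intro mult_mono mult_left_mono; simp add: E_def)
  also have "\<dots> = (1 + \<alpha>) * \<kappa> * (x powr (3*\<alpha>/2) * x powr (-\<alpha>/2)) * exp (-\<kappa> * x powr \<alpha> * \<bar>x - \<rho>\<bar>)"
    by (simp add: mult_ac)
  also have "x powr (3*\<alpha>/2) * x powr (-\<alpha>/2) = x powr \<alpha>" by (simp add: powr_add[symmetric])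
  finally show "green_kernel \<alpha> \<kappa> (2*\<alpha>) x \<rho> \<le> (1 + \<alpha>) * \<kappa> * x powr \<alpha> * exp (-\<kappa> * x powr \<alpha> * \<bar>x - \<rho>\<bar>)" .
  have "x powr (3*\<alpha>/2) \<le> (2 * \<rho>) powr (3*\<alpha>/2)" using assms by (intro powr_mono2) auto
  also have "\<dots> = 2 powr (3*\<alpha>/2) * \<rho> powr (3*\<alpha>/2)" using assms by (simp add: powr_mult)
  also have "\<dots> \<le> 4 * \<rho> powr (3*\<alpha>/2)" using powr_mono[of "3*\<alpha>/2" 2 2] assms
    by (intro mult_right_mono) auto
  finally have "x powr (3*\<alpha>/2) \<le> 4 * \<rho> powr (3*\<alpha>/2)" .
  with K E_\<rho> assms have "green_kernel \<alpha> \<kappa> (2*\<alpha>) x \<rho>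
      \<le> (1 + \<alpha>) * \<kappa> * (4 * \<rho> powr (3*\<alpha>/2)) * \<rho> powr (-\<alpha>/2) * (exp (-\<kappa> * \<rho> powr \<alpha> * \<bar>x - \<rho>\<bar>) / 2)"
    by (elim order_trans) (intro mult_mono mult_right_mono mult_left_mono; simp add: E_def)
  also have "\<dots> = 2 * (1 + \<alpha>) * \<kappa> * (\<rho> powr (3*\<alpha>/2) * \<rho> powr (-\<alpha>/2)) * exp (-\<kappa> * \<rho> powr \<alpha> * \<bar>x - \<rho>\<bar>)"
    by (simp add: mult_ac)
  also have "\<rho> powr (3*\<alpha>/2) * \<rho> powr (-\<alpha>/2) = \<rho> powr \<alpha>" by (simp add: powr_add[symmetric])
  finally show "green_kernel \<alpha> \<kappa> (2*\<alpha>) x \<rho> \<le> 2 * (1 + \<alpha>) * \<kappa> * \<rho> powr \<alpha>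
      * exp (-\<kappa> * \<rho> powr \<alpha> * \<bar>x - \<rho>\<bar>)" .
qed

lemma green_kernel_row_majorant:
  assumes "0 \<le> \<alpha>" "\<alpha> \<le> 1" "0 \<le> \<kappa>" "0 < x"
  shows "green_kernel \<alpha> \<kappa> (2*\<alpha>) x \<rho>
    \<le> (1 + \<alpha>) * \<kappa> * x powr \<alpha> * exp (-\<kappa> * x powr \<alpha> * \<bar>x - \<rho>\<bar>)
      + (1 + \<alpha>) * \<kappa> / 2 * x powr (3*\<alpha>/2) * exp (-\<kappa>/2 * x powr (1 + \<alpha>))
          * (indicator {0..x} \<rho> * \<rho> powr (-\<alpha>/2))"
    (is "_ \<le> ?near + ?far")
proof -
  have "0 \<le> ?near" "0 \<le> ?far" using assms by auto
  consider "\<rho> \<le> 0" | "0 < \<rho>" "2 * \<rho> \<le> x" | "0 < \<rho>" "x < 2 * \<rho>" by linarith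
  then show ?thesis
  proof cases
    case 1
    then show ?thesis using \<open>0 \<le> ?near\<close> \<open>0 \<le> ?far\<close> by (simp add: green_kernel_def)
  next
    case 2
    then have "green_kernel \<alpha> \<kappa> (2*\<alpha>) x \<rho> \<le> ?far"
      using green_kernel_2alpha_far(1)[of \<alpha> \<kappa> \<rho> x] assms by (simp add: mult_ac)
    with \<open>0 \<le> ?near\<close> show ?thesis by linarith
  next
    case 3
    then have "green_kernel \<alpha> \<kappa> (2*\<alpha>) x \<rho> \<le> ?near" using green_kernel_2alpha_near(1) assms by simp
    with \<open>0 \<le> ?far\<close> show ?thesis by linarith
  qed
qed

lemma green_kernel_col_majorant:
  assumes "0 \<le> \<alpha>" "\<alpha> \<le> 1" "0 \<le> \<kappa>" "0 < \<rho>"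
  shows "green_kernel \<alpha> \<kappa> (2*\<alpha>) x \<rho>
    \<le> 2 * (1 + \<alpha>) * \<kappa> * \<rho> powr \<alpha> * exp (-\<kappa> * \<rho> powr \<alpha> * \<bar>x - \<rho>\<bar>)
      + (1 + \<alpha>) * \<kappa>\<^sup>2 * (indicator {0..} x * (x powr (1 + 2*\<alpha>) * exp (-\<kappa>/2 * x powr (1 + \<alpha>))))"
    (is "_ \<le> ?near + ?far")
proof -
  have "0 \<le> ?near" "0 \<le> ?far" using assms by auto
  consider "x \<le> 0" | "0 < x" "2 * \<rho> \<le> x" | "0 < x" "x < 2 * \<rho>" by linarith
  then show ?thesis
  proof cases
    case 1
    then show ?thesis using \<open>0 \<le> ?near\<close> \<open>0 \<le> ?far\<close> by (simp add: green_kernel_def)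
  next
    case 2
    then have "green_kernel \<alpha> \<kappa> (2*\<alpha>) x \<rho> \<le> ?far"
      using green_kernel_2alpha_far(2)[of \<alpha> \<kappa> \<rho> x] assms by (simp add: mult_ac)
    with \<open>0 \<le> ?near\<close> show ?thesis by linarith
  next
    case 3
    then have "green_kernel \<alpha> \<kappa> (2*\<alpha>) x \<rho> \<le> ?near" using green_kernel_2alpha_near(2) assms by simp
    with \<open>0 \<le> ?far\<close> show ?thesis by linarith
  qed
qed

lemma green_kernel_2alpha_row_bound:
  assumes "0 \<le> \<alpha>" "\<alpha> \<le> 1" "0 < \<kappa>" "0 < x"
  shows "(\<integral>\<^sup>+\<rho>. ennreal (green_kernel \<alpha> \<kappa> (2*\<alpha>) x \<rho>) \<partial>lborel) \<le> 8"
proof -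
  define \<beta> where "\<beta> = \<kappa> * x powr \<alpha>"
  define P where "P = \<kappa> * x powr (1 + \<alpha>)"
  have \<beta>: "0 < \<beta>" and P: "0 \<le> P" using assms by (simp_all add: \<beta>_def P_def)
  have "(\<integral>\<^sup>+\<rho>. ennreal (green_kernel \<alpha> \<kappa> (2*\<alpha>) x \<rho>) \<partial>lborel)
      \<le> ennreal ((1 + \<alpha>) * \<kappa> * x powr \<alpha> * (2/\<beta>)
          + (1 + \<alpha>) * \<kappa> / 2 * x powr (3*\<alpha>/2) * exp (-\<kappa>/2 * x powr (1 + \<alpha>))
            * (x powr (-\<alpha>/2 + 1) / (-\<alpha>/2 + 1)))"
  proof (rule nn_integral_le_by_majorants)
    show "green_kernel \<alpha> \<kappa> (2*\<alpha>) x \<rho> \<le> (1 + \<alpha>) * \<kappa> * x powr \<alpha> * exp (-\<beta> * \<bar>\<rho> - x\<bar>)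
        + (1 + \<alpha>) * \<kappa> / 2 * x powr (3*\<alpha>/2) * exp (-\<kappa>/2 * x powr (1 + \<alpha>))
          * (indicator {0..x} \<rho> * \<rho> powr (-\<alpha>/2))" for \<rho>
      using green_kernel_row_majorant[OF assms(1,2) _ assms(4), of \<kappa> \<rho>] assms
      by (simp add: \<beta>_def abs_minus_commute mult_ac)
    show "(\<integral>\<^sup>+\<rho>. ennreal (exp (-\<beta> * \<bar>\<rho> - x\<bar>)) \<partial>lborel) \<le> ennreal (2/\<beta>)"
      using \<beta> by (rule nn_integral_exp_neg_abs_le)
    show "(\<integral>\<^sup>+\<rho>. ennreal (indicator {0..x} \<rho> * \<rho> powr (-\<alpha>/2)) \<partial>lborel)
        \<le> ennreal (x powr (-\<alpha>/2 + 1) / (-\<alpha>/2 + 1))"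
      using assms by (subst nn_integral_powr_Icc) auto
  qed (use assms \<beta> in auto)
  also have "\<dots> \<le> ennreal 8"
  proof (intro ennreal_leI)
    have xp: "x powr (3*\<alpha>/2) * x powr (-\<alpha>/2 + 1) = x powr (1 + \<alpha>)"
      using powr_add[of x "3*\<alpha>/2" "-\<alpha>/2 + 1"] by (simp add: add.commute)
    have "(1 + \<alpha>) * \<kappa> / 2 * x powr (3*\<alpha>/2) * exp (-\<kappa>/2 * x powr (1 + \<alpha>))
        * (x powr (-\<alpha>/2 + 1) / (-\<alpha>/2 + 1))
        = (1 + \<alpha>) / (2 - \<alpha>) * (\<kappa> * (x powr (3*\<alpha>/2) * x powr (-\<alpha>/2 + 1)) * exp (-\<kappa>/2 * x powr (1 + \<alpha>)))"
      using assms by (simp add: field_simps)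
    also have "\<dots> = (1 + \<alpha>) / (2 - \<alpha>) * (P * exp (-P/2))"
      unfolding xp P_def by simp
    also have "\<dots> \<le> (1 + \<alpha>) / (2 - \<alpha>) * 2"
      using mult_exp_neg_half_le[OF P] assms by (intro mult_left_mono) auto
    also have "\<dots> \<le> 4" using assms by (simp add: field_simps)
    finally show "(1 + \<alpha>) * \<kappa> * x powr \<alpha> * (2/\<beta>)
          + (1 + \<alpha>) * \<kappa> / 2 * x powr (3*\<alpha>/2) * exp (-\<kappa>/2 * x powr (1 + \<alpha>))
            * (x powr (-\<alpha>/2 + 1) / (-\<alpha>/2 + 1)) \<le> 8"
      using assms \<beta> by (simp add: \<beta>_def)
  qed
  finally show ?thesis by simp
qed

lemma green_kernel_2alpha_col_bound:
  assumes "0 \<le> \<alpha>" "\<alpha> \<le> 1" "0 < \<kappa>" "0 < \<rho>"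
  shows "(\<integral>\<^sup>+x. ennreal (green_kernel \<alpha> \<kappa> (2*\<alpha>) x \<rho>) \<partial>lborel) \<le> 12"
proof -
  define \<beta> where "\<beta> = \<kappa> * \<rho> powr \<alpha>"
  have \<beta>: "0 < \<beta>" using assms by (simp add: \<beta>_def)
  have "(\<integral>\<^sup>+x. ennreal (green_kernel \<alpha> \<kappa> (2*\<alpha>) x \<rho>) \<partial>lborel)
      \<le> ennreal (2 * (1 + \<alpha>) * \<kappa> * \<rho> powr \<alpha> * (2/\<beta>) + (1 + \<alpha>) * \<kappa>\<^sup>2 * (1 / ((1 + \<alpha>) * (\<kappa>/2)\<^sup>2)))"
  proof (rule nn_integral_le_by_majorants)
    show "green_kernel \<alpha> \<kappa> (2*\<alpha>) x \<rho> \<le> 2 * (1 + \<alpha>) * \<kappa> * \<rho> powr \<alpha> * exp (-\<beta> * \<bar>x - \<rho>\<bar>)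
        + (1 + \<alpha>) * \<kappa>\<^sup>2 * (indicator {0..} x
            * (x powr (2 * (1 + \<alpha>) - 1) * exp (-(\<kappa>/2) * x powr (1 + \<alpha>))))"
      for x
      using green_kernel_col_majorant[OF assms(1,2) _ assms(4), of \<kappa> x] assms
      by (simp add: \<beta>_def mult_ac)
    show "(\<integral>\<^sup>+x. ennreal (exp (-\<beta> * \<bar>x - \<rho>\<bar>)) \<partial>lborel) \<le> ennreal (2/\<beta>)"
      using \<beta> by (rule nn_integral_exp_neg_abs_le)
    show "(\<integral>\<^sup>+x. ennreal (indicator {0..} x
        * (x powr (2 * (1 + \<alpha>) - 1) * exp (-(\<kappa>/2) * x powr (1 + \<alpha>)))) \<partial>lborel)
        \<le> ennreal (1 / ((1 + \<alpha>) * (\<kappa>/2)\<^sup>2))"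
      using assms by (subst nn_integral_powr_exp_neg_powr) auto
  qed (use assms \<beta> in auto)
  also have "\<dots> \<le> ennreal 12"
  proof (intro ennreal_leI)
    have near: "2 * (1 + \<alpha>) * \<kappa> * \<rho> powr \<alpha> * (2/\<beta>) = 4 * (1 + \<alpha>)"
      using \<beta> assms by (simp add: \<beta>_def)
    have far: "(1 + \<alpha>) * \<kappa>\<^sup>2 * (1 / ((1 + \<alpha>) * (\<kappa>/2)\<^sup>2)) = 4"
      using assms by (simp add: power2_eq_square)
    show "2 * (1 + \<alpha>) * \<kappa> * \<rho> powr \<alpha> * (2/\<beta>) + (1 + \<alpha>) * \<kappa>\<^sup>2 * (1 / ((1 + \<alpha>) * (\<kappa>/2)\<^sup>2)) \<le> 12"
      unfolding near far using assms by simp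
  qed
  finally show ?thesis by simp
qed

lemma green_kernel_row_bound:
  assumes "0 \<le> \<alpha>" "\<alpha> \<le> 1" "0 < \<kappa>" "\<alpha> - 1 \<le> a" "a \<le> 2*\<alpha>" "0 < x"
  shows "(\<integral>\<^sup>+\<rho>. ennreal (green_kernel \<alpha> \<kappa> a x \<rho>) \<partial>lborel) \<le> ennreal (8 + 2 * (1 + \<alpha>) * \<kappa>)"
proof (cases "1 \<le> x")
  case True
  have "(\<integral>\<^sup>+\<rho>. ennreal (green_kernel \<alpha> \<kappa> a x \<rho>) \<partial>lborel)
      \<le> (\<integral>\<^sup>+\<rho>. ennreal (green_kernel \<alpha> \<kappa> (2*\<alpha>) x \<rho>) \<partial>lborel)"
    using True assms by (intro nn_integral_mono ennreal_leI green_kernel_mono_exponent) auto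
  also have "\<dots> \<le> 8" using assms by (intro green_kernel_2alpha_row_bound) auto
  also have "\<dots> \<le> ennreal (8 + 2 * (1 + \<alpha>) * \<kappa>)" using assms by (simp add: ennreal_leI)
  finally show ?thesis .
next
  case False
  define \<beta> where "\<beta> = \<kappa> * x powr \<alpha>"
  have \<beta>: "0 < \<beta>" using assms by (simp add: \<beta>_def)
  have "(\<integral>\<^sup>+\<rho>. ennreal (green_kernel \<alpha> \<kappa> a x \<rho>) \<partial>lborel)
      \<le> (\<integral>\<^sup>+\<rho>. ennreal ((1 + \<alpha>) * \<kappa>\<^sup>2 * x powr (a + 1)) * ennreal (exp (-\<beta> * \<bar>\<rho> - x\<bar>)) \<partial>lborel)"
    using green_kernel_le_exp_abs[of \<alpha> \<kappa> x a] assms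
    by (intro nn_integral_mono) (simp add: \<beta>_def abs_minus_commute ennreal_mult'[symmetric] mult_ac ennreal_leI)
  also have "\<dots> = ennreal ((1 + \<alpha>) * \<kappa>\<^sup>2 * x powr (a + 1)) * (\<integral>\<^sup>+\<rho>. ennreal (exp (-\<beta> * \<bar>\<rho> - x\<bar>)) \<partial>lborel)"
    by (rule nn_integral_cmult) simp
  also have "\<dots> \<le> ennreal ((1 + \<alpha>) * \<kappa>\<^sup>2 * x powr (a + 1)) * ennreal (2/\<beta>)"
    using \<beta> by (intro mult_left_mono nn_integral_exp_neg_abs_le) auto
  also have "\<dots> = ennreal (2 * (1 + \<alpha>) * \<kappa> * x powr (a + 1 - \<alpha>))"
    using assms by (simp add: ennreal_mult'[symmetric] \<beta>_def powr_diff power2_eq_square)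
  also have "\<dots> \<le> ennreal (8 + 2 * (1 + \<alpha>) * \<kappa>)"
  proof (intro ennreal_leI)
    have "x powr (a + 1 - \<alpha>) \<le> 1" using False assms by (intro powr_le1) auto
    then have "2 * (1 + \<alpha>) * \<kappa> * x powr (a + 1 - \<alpha>) \<le> 2 * (1 + \<alpha>) * \<kappa>"
      using assms by (intro mult_left_le) auto
    then show "2 * (1 + \<alpha>) * \<kappa> * x powr (a + 1 - \<alpha>) \<le> 8 + 2 * (1 + \<alpha>) * \<kappa>" by linarith
  qed
  finally show ?thesis .
qed

lemma green_kernel_col_bound:
  assumes "0 \<le> \<alpha>" "\<alpha> \<le> 1" "0 < \<kappa>" "\<alpha> - 1 \<le> a" "a \<le> 2*\<alpha>" "0 < \<rho>"
  shows "(\<integral>\<^sup>+x. ennreal (green_kernel \<alpha> \<kappa> a x \<rho>) \<partial>lborel) \<le> ennreal (12 + (1 + \<alpha>) * \<kappa>\<^sup>2 / (a + 2))"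
proof -
  have "(\<integral>\<^sup>+x. ennreal (green_kernel \<alpha> \<kappa> a x \<rho>) \<partial>lborel)
      \<le> ennreal (1 * 12 + (1 + \<alpha>) * \<kappa>\<^sup>2 * (1 powr (a + 1 + 1) / (a + 1 + 1)))"
  proof (rule nn_integral_le_by_majorants)
    show "green_kernel \<alpha> \<kappa> a x \<rho> \<le> 1 * green_kernel \<alpha> \<kappa> (2*\<alpha>) x \<rho> + (1 + \<alpha>) * \<kappa>\<^sup>2
        * (indicator {0..1} x * x powr (a + 1))"
      for x
    proof -
      consider "x \<le> 0" | "1 \<le> x" | "0 < x" "x < 1" by linarith
      then show ?thesis
      proof cases
        case 1
        then show ?thesis using assms by (simp add: green_kernel_def)
      next
        case 2
        have "0 \<le> (1 + \<alpha>) * \<kappa>\<^sup>2 * (indicator {0..1} x * x powr (a + 1))" using assms by simp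
        with green_kernel_mono_exponent[of x a "2*\<alpha>" \<alpha> \<kappa> \<rho>] 2 assms show ?thesis by linarith
      next
        case 3
        have "green_kernel \<alpha> \<kappa> a x \<rho> \<le> (1 + \<alpha>) * \<kappa>\<^sup>2 * x powr (a + 1) * exp (-\<kappa> * x powr \<alpha> * \<bar>x - \<rho>\<bar>)"
          using 3 assms by (intro green_kernel_le_exp_abs) auto
        also have "\<dots> \<le> (1 + \<alpha>) * \<kappa>\<^sup>2 * x powr (a + 1)"
          using assms by (intro mult_left_le) auto
        finally show ?thesis using 3 assms green_kernel_nonneg[of \<alpha> \<kappa> "2*\<alpha>" x \<rho>] by simp
      qed
    qed
    show "(\<integral>\<^sup>+x. ennreal (green_kernel \<alpha> \<kappa> (2*\<alpha>) x \<rho>) \<partial>lborel) \<le> ennreal 12"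
      using assms green_kernel_2alpha_col_bound[of \<alpha> \<kappa> \<rho>] by simp
    show "(\<integral>\<^sup>+x. ennreal (indicator {0..1} x * x powr (a + 1)) \<partial>lborel)
        \<le> ennreal (1 powr (a + 1 + 1) / (a + 1 + 1))"
      using assms by (subst nn_integral_powr_Icc) auto
  qed (use assms green_kernel_nonneg in auto)
  then show ?thesis by (simp add: add.assoc)
qed

lemma green_kernel_L2_bounded_by:
  assumes "0 \<le> \<alpha>" "\<alpha> \<le> 1" "0 < \<kappa>" "\<alpha> - 1 \<le> a" "a \<le> 2*\<alpha>"
  shows "L2_bounded_by (sqrt ((8 + 2 * (1 + \<alpha>) * \<kappa>)
      * (12 + (1 + \<alpha>) * \<kappa>\<^sup>2 / (a + 2)))) (green_kernel \<alpha> \<kappa> a)"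
proof (rule L2_bounded_by_Schur_test)
  show "(\<integral>\<^sup>+\<rho>\<in>{0<..}. ennreal (green_kernel \<alpha> \<kappa> a x \<rho>) \<partial>lborel) \<le> ennreal (8 + 2 * (1 + \<alpha>) * \<kappa>)"
    if "0 < x" for x
    using assms that by (intro order_trans[OF set_nn_integral_le_nn_integral] green_kernel_row_bound)
  show "(\<integral>\<^sup>+x\<in>{0<..}. ennreal (green_kernel \<alpha> \<kappa> a x \<rho>) \<partial>lborel) \<le> ennreal (12 + (1 + \<alpha>) * \<kappa>\<^sup>2 / (a + 2))"
    if "0 < \<rho>" for \<rho>
    using assms that by (intro order_trans[OF set_nn_integral_le_nn_integral] green_kernel_col_bound)
qed (use assms green_kernel_nonneg in auto)

lemma green_kernel_2alpha_L2_bounded_by: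
  assumes "0 \<le> \<alpha>" "\<alpha> \<le> 1" "0 < \<kappa>"
  shows "L2_bounded_by (sqrt (8 * 12)) (green_kernel \<alpha> \<kappa> (2*\<alpha>))"
proof (rule L2_bounded_by_Schur_test)
  show "(\<integral>\<^sup>+\<rho>\<in>{0<..}. ennreal (green_kernel \<alpha> \<kappa> (2*\<alpha>) x \<rho>) \<partial>lborel) \<le> ennreal 8" if "0 < x" for x
    using green_kernel_2alpha_row_bound[of \<alpha> \<kappa> x] assms that
    by (intro order_trans[OF set_nn_integral_le_nn_integral]) simp
  show "(\<integral>\<^sup>+x\<in>{0<..}. ennreal (green_kernel \<alpha> \<kappa> (2*\<alpha>) x \<rho>) \<partial>lborel) \<le> ennreal 12" if "0 < \<rho>" for \<rho>
    using green_kernel_2alpha_col_bound[of \<alpha> \<kappa> \<rho>] assms that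
    by (intro order_trans[OF set_nn_integral_le_nn_integral]) simp
qed (use assms green_kernel_nonneg in auto)

lemma green_kernel_0_selfadjoint:
  assumes "0 \<le> \<alpha>" "\<alpha> \<le> 1" "0 < \<kappa>"
  shows "L2_selfadjoint (green_kernel \<alpha> \<kappa> 0)"
proof (rule L2_selfadjoint_of_symmetric_kernel)
  show "(\<integral>\<^sup>+\<rho>\<in>{0<..}. ennreal (green_kernel \<alpha> \<kappa> 0 x \<rho>) \<partial>lborel) \<le> ennreal (8 + 2 * (1 + \<alpha>) * \<kappa>)"
    if "0 < x" for x
    using assms that by (intro order_trans[OF set_nn_integral_le_nn_integral] green_kernel_row_bound) auto
qed (use assms green_kernel_nonneg green_kernel_symmetric in auto)

theorem lemma3p3:
  fixes \<alpha> :: real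
  assumes "0 < \<alpha>" and "\<alpha> < 1"
  shows "(\<forall>k::int. k \<noteq> 0 \<longrightarrow>
            (\<forall>a::real. -(1 - \<alpha>)/2 < a \<and> a \<le> 2*\<alpha> \<longrightarrow> L2_bounded (Gker a \<alpha> k))
          \<and> L2_selfadjoint (Gker 0 \<alpha> k))
       \<and> (\<exists>C. \<forall>k::int. k \<noteq> 0 \<longrightarrow> L2_bounded_by C (Gker (2*\<alpha>) \<alpha> k))"
proof -
  have "(\<forall>a. -(1 - \<alpha>)/2 < a \<and> a \<le> 2*\<alpha> \<longrightarrow> L2_bounded (Gker a \<alpha> k))
      \<and> L2_selfadjoint (Gker 0 \<alpha> k) \<and> L2_bounded_by (sqrt (8 * 12)) (Gker (2*\<alpha>) \<alpha> k)"
    if "k \<noteq> 0" for k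
  proof -
    define \<kappa> where "\<kappa> = \<bar>real_of_int k\<bar> / (1 + \<alpha>)"
    have "0 < \<kappa>" using that assms by (simp add: \<kappa>_def)
    have "L2_bounded (green_kernel \<alpha> \<kappa> a)" if "-(1 - \<alpha>)/2 < a" "a \<le> 2*\<alpha>" for a
    proof -
      have "0 \<le> \<alpha>" "\<alpha> \<le> 1" "\<alpha> - 1 \<le> a" using that assms by simp_all
      with green_kernel_L2_bounded_by[of \<alpha> \<kappa> a] \<open>0 < \<kappa>\<close> \<open>a \<le> 2*\<alpha>\<close> show ?thesis
        unfolding L2_bounded_def by blast
    qed
    then show ?thesis
      using green_kernel_0_selfadjoint[of \<alpha> \<kappa>] green_kernel_2alpha_L2_bounded_by[of \<alpha> \<kappa>] \<open>0 < \<kappa>\<close> assms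
      unfolding Gker_eq_green_kernel[OF assms(1) that] \<kappa>_def[symmetric] by simp
  qed
  then show ?thesis by blast
qed

end
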